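(* Let $T$ be a minimal homeomorphism of a compact metric space $(X,\delta)$, let $G$ be a locally compact second countable group and let $f\colon X\to G$ be continuous. Then for every $x\in X$ and every integer $n$, \[E_{T^n x}(f)=f(n,x)\cdot E_x(f)\cdot f(n,x)^{-1}.\]
   Context: The cocycle is defined by $f(n,x)=f(T^{n-1}x)\cdots f(Tx)f(x)$ for $n\ge1$, $f(0,x)=\mathbf{1}_G$, and $f(n,x)=f(-n,T^nx)^{-1}$ for $n<0$. It satisfies $f(k,T^lx)f(l,x)=f(k+l,x)$. The essential range at $x\in X$, denoted $E_x(f)$, is the set of $g\in G$ such that for every open neighbourhood $U$ of $g$ and every open neighbourhood $\mathcal O$ of $x$ there is an integer $n\neq0$ with $T^{-n}\mathcal O\cap\mathcal O\cap\{y: f(n,y)\in U\}\neq\varnothing$. *)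

theory Defs
  imports "HOL-Analysis.Analysis"
begin

text \<open>Integer powers of an invertible map T on the whole type (the space X is
  the underlying type; the inverse is inv T).\<close>
definition Tpow :: "('a \<Rightarrow> 'a) \<Rightarrow> int \<Rightarrow> 'a \<Rightarrow> 'a" where
  "Tpow T n = (if n \<ge> 0 then T ^^ nat n else (inv T) ^^ nat (- n))"

definition minimal_map :: "('a::topological_space \<Rightarrow> 'a) \<Rightarrow> bool" where
  "minimal_map T \<longleftrightarrow> (\<forall>A. closed A \<and> T ` A = A \<longrightarrow> A = {} \<or> A = UNIV)"

text \<open>The group G is written additively (group_add need not be commutative).
  cocycle_nat f T n x = f(T^(n-1) x) + ... + f(T x) + f x.\<close>
fun cocycle_nat :: "('a \<Rightarrow> 'g::group_add) \<Rightarrow> ('a \<Rightarrow> 'a) \<Rightarrow> nat \<Rightarrow> 'a \<Rightarrow> 'g" where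
  "cocycle_nat f T 0 x = 0"
| "cocycle_nat f T (Suc n) x = f ((T ^^ n) x) + cocycle_nat f T n x"

definition cocycle :: "('a \<Rightarrow> 'g::group_add) \<Rightarrow> ('a \<Rightarrow> 'a) \<Rightarrow> int \<Rightarrow> 'a \<Rightarrow> 'g" where
  "cocycle f T n x = (if n \<ge> 0 then cocycle_nat f T (nat n) x
                      else - cocycle_nat f T (nat (- n)) (Tpow T n x))"

definition ess_range_at :: "('a::topological_space \<Rightarrow> 'g::{group_add,topological_space})
    \<Rightarrow> ('a \<Rightarrow> 'a) \<Rightarrow> 'a \<Rightarrow> 'g set" where
  "ess_range_at f T x = {g. \<forall>U V. open U \<and> g \<in> U \<and> open V \<and> x \<in> V \<longrightarrow>
      (\<exists>n::int. n \<noteq> 0 \<and> {y. Tpow T n y \<in> V} \<inter> V \<inter> {y. cocycle f T n y \<in> U} \<noteq> {})}"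

end

theory Submission
  imports Defs
begin

text \<open>For a homeomorphism \<open>T\<close> and continuous \<open>f\<close> the maps \<open>T\<^sup>n\<close> and \<open>f(n,\<cdot>)\<close> are continuous,
  and the cocycle identity gives \<open>f(m, T\<^sup>n y) = f(n, T\<^sup>m y) f(m, y) f(n, y)\<^sup>-\<^sup>1\<close>.
  Hence if \<open>y\<close> and \<open>T\<^sup>m y\<close> lie near \<open>x\<close> and \<open>f(m, y)\<close> lies near \<open>g\<close>, then \<open>z = T\<^sup>n y\<close> and
  \<open>T\<^sup>m z\<close> lie near \<open>T\<^sup>n x\<close> and \<open>f(m, z)\<close> lies near \<open>f(n, x) g f(n, x)\<^sup>-\<^sup>1\<close>. This gives one
  inclusion for every \<open>n\<close>; applying it to \<open>-n\<close> at the point \<open>T\<^sup>n x\<close> gives the other.\<close>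

lemma Tpow_0 [simp]: "Tpow T 0 = id"
  by (simp add: Tpow_def)

lemma Tpow_of_nat [simp]: "Tpow T (int k) = T ^^ k"
  by (simp add: Tpow_def)

lemma Tpow_neg_of_nat [simp]: "Tpow T (- int k) = inv T ^^ k"
  by (simp add: Tpow_def)

lemma Tpow_plus1:
  assumes "bij T"
  shows "Tpow T (n + 1) y = Tpow T n (T y)"
proof (cases n)
  case (nonneg k)
  then have "n + 1 = int (Suc k)" by simp
  then show ?thesis using nonneg by (simp only: Tpow_of_nat funpow_Suc_right o_apply)
next
  case (neg k)
  then have "n + 1 = - int k" by simp
  then show ?thesis
    using neg assms by (simp only: Tpow_neg_of_nat funpow_Suc_right o_apply inv_f_f bij_is_inj)
qed

lemma Tpow_minus1:
  assumes "bij T"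
  shows "Tpow T (n - 1) y = Tpow T n (inv T y)"
  using Tpow_plus1[OF assms, of "n - 1" "inv T y"] assms by (simp add: surj_f_inv_f bij_is_surj)

lemma Tpow_add:
  assumes "bij T"
  shows "Tpow T (a + b) y = Tpow T a (Tpow T b y)"
proof (induction b arbitrary: y rule: int_induct[where k = 0])
  case base
  then show ?case by simp
next
  case (step1 b)
  then show ?case by (metis Tpow_plus1[OF assms] add.assoc)
next
  case (step2 b)
  then show ?case by (metis Tpow_minus1[OF assms] add_diff_eq)
qed

lemma Tpow_neg_cancel:
  assumes "bij T"
  shows "Tpow T (- n) (Tpow T n x) = x"
  using Tpow_add[OF assms, of "- n" n x] by simp

lemma cocycle_0 [simp]: "cocycle f T 0 x = 0"
  by (simp add: cocycle_def)

lemma cocycle_of_nat [simp]: "cocycle f T (int k) = cocycle_nat f T k"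
  by (simp add: cocycle_def fun_eq_iff)

lemma cocycle_neg_of_nat: "cocycle f T (- int k) x = - cocycle_nat f T k ((inv T ^^ k) x)"
  by (cases "k = 0") (simp_all add: cocycle_def)

lemma cocycle_nat_add:
  "cocycle_nat f T (a + b) y = cocycle_nat f T a ((T ^^ b) y) + cocycle_nat f T b y"
  by (induction a) (auto simp: funpow_add add.assoc)

lemma cocycle_plus1:
  assumes "bij T"
  shows "cocycle f T (n + 1) y = cocycle f T n (T y) + f y"
proof (cases n)
  case (nonneg k)
  then have "cocycle f T (n + 1) y = cocycle_nat f T (k + 1) y"
    by (simp add: cocycle_def nat_add_distrib)
  then show ?thesis using nonneg cocycle_nat_add[of f T k 1 y] by simp
next
  case (neg k)
  define z where "z = (inv T ^^ k) y"
  have "(T ^^ k) z = y"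
    using fn_o_inv_fn_is_id[OF assms, of k] by (simp add: z_def fun_eq_iff)
  moreover have "(inv T ^^ Suc k) (T y) = z"
    using assms by (simp add: z_def funpow_Suc_right bij_is_inj del: funpow.simps)
  ultimately have "cocycle f T n (T y) = - (f y + cocycle_nat f T k z)"
    using neg by (simp only: cocycle_neg_of_nat cocycle_nat.simps)
  moreover have "cocycle f T (n + 1) y = - cocycle_nat f T k z"
    using neg by (simp add: cocycle_neg_of_nat z_def)
  ultimately show ?thesis by (simp add: minus_add add.assoc)
qed

lemma cocycle_minus1:
  assumes "bij T"
  shows "cocycle f T (n - 1) y = cocycle f T n (inv T y) - f (inv T y)"
  using cocycle_plus1[OF assms, of f "n - 1" "inv T y"] assms
  by (simp add: surj_f_inv_f bij_is_surj eq_diff_eq)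

lemma cocycle_add:
  assumes "bij T"
  shows "cocycle f T k (Tpow T l y) + cocycle f T l y = cocycle f T (k + l) y"
proof (induction l arbitrary: y rule: int_induct[where k = 0])
  case base
  then show ?case by simp
next
  case (step1 l)
  have "cocycle f T k (Tpow T (l + 1) y) + cocycle f T (l + 1) y
      = (cocycle f T k (Tpow T l (T y)) + cocycle f T l (T y)) + f y"
    by (simp only: Tpow_plus1[OF assms] cocycle_plus1[OF assms] add.assoc)
  also have "\<dots> = cocycle f T (k + (l + 1)) y"
    by (simp only: step1 cocycle_plus1[OF assms] add.assoc[symmetric])
  finally show ?case .
next
  case (step2 l)
  have "cocycle f T k (Tpow T (l - 1) y) + cocycle f T (l - 1) y
      = (cocycle f T k (Tpow T l (inv T y)) + cocycle f T l (inv T y)) - f (inv T y)"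
    by (simp only: Tpow_minus1[OF assms] cocycle_minus1[OF assms] add_diff_eq)
  also have "\<dots> = cocycle f T (k + (l - 1)) y"
    by (simp only: step2 cocycle_minus1[OF assms] add_diff_eq)
  finally show ?case .
qed

lemma cocycle_neg:
  assumes "bij T"
  shows "cocycle f T (- n) (Tpow T n x) = - cocycle f T n x"
  using cocycle_add[OF assms, of f "- n" n x] by (simp add: eq_neg_iff_add_eq_0)

lemma continuous_on_funpow:
  fixes g :: "'a::topological_space \<Rightarrow> 'a"
  assumes "continuous_on UNIV g"
  shows "continuous_on UNIV (g ^^ k)"
  by (induction k) (auto simp: id_def intro: continuous_on_compose2[OF assms])

lemma continuous_on_Tpow:
  fixes T :: "'a::topological_space \<Rightarrow> 'a"
  assumes "continuous_on UNIV T" "continuous_on UNIV (inv T)"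
  shows "continuous_on UNIV (Tpow T n)"
  by (simp add: Tpow_def continuous_on_funpow assms)

lemma continuous_on_cocycle_nat:
  fixes f :: "'a::topological_space \<Rightarrow> 'g::topological_group_add"
  assumes "continuous_on UNIV T" "continuous_on UNIV f"
  shows "continuous_on UNIV (cocycle_nat f T k)"
proof (induction k)
  case 0
  then show ?case by simp
next
  case (Suc k)
  have "cocycle_nat f T (Suc k) = (\<lambda>x. f ((T ^^ k) x) + cocycle_nat f T k x)"
    by (simp add: fun_eq_iff)
  then show ?case
    using Suc by (auto intro!: continuous_on_add
        intro: continuous_on_compose2[OF assms(2) continuous_on_funpow[OF assms(1)]])
qed

lemma continuous_on_cocycle:
  fixes f :: "'a::topological_space \<Rightarrow> 'g::topological_group_add"
  assumes "continuous_on UNIV T" "continuous_on UNIV (inv T)" "continuous_on UNIV f"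
  shows "continuous_on UNIV (cocycle f T n)"
proof -
  have "cocycle f T n = (if n \<ge> 0 then cocycle_nat f T (nat n)
          else (\<lambda>x. - cocycle_nat f T (nat (- n)) (Tpow T n x)))"
    by (simp add: cocycle_def fun_eq_iff)
  then show ?thesis
    using continuous_on_Tpow[OF assms(1,2)]
    by (auto intro!: continuous_on_minus
        intro: continuous_on_compose2[OF continuous_on_cocycle_nat[OF assms(1,3)]])
qed

lemma homeomorphism_imp_bij:
  assumes "homeomorphism UNIV UNIV T (inv T)"
  shows "bij T"
  by (rule o_bij[where g = "inv T"])
    (auto simp: fun_eq_iff homeomorphism_apply1[OF assms] homeomorphism_apply2[OF assms])

lemma Tpow_commute:
  assumes "bij T"
  shows "Tpow T m (Tpow T n y) = Tpow T n (Tpow T m y)"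
  by (metis Tpow_add[OF assms] add.commute)

lemma cocycle_at_Tpow:
  fixes f :: "'a \<Rightarrow> 'g::group_add"
  assumes "bij T"
  shows "cocycle f T m (Tpow T n y) = cocycle f T n (Tpow T m y) + cocycle f T m y - cocycle f T n y"
  using cocycle_add[OF assms, of f m n y] cocycle_add[OF assms, of f n m y]
  by (simp add: add.commute eq_diff_eq)

lemma open_conjugate_nhds:
  fixes U :: "'g::topological_group_add set"
  assumes "open U" "c + g - c \<in> U"
  obtains A B where "open A" "open B" "c \<in> A" "g \<in> B"
    "\<And>a b a'. a \<in> A \<Longrightarrow> b \<in> B \<Longrightarrow> a' \<in> A \<Longrightarrow> a + b - a' \<in> U"
proof -
  define h where "h = (\<lambda>(a, b, a'). a + b - a' :: 'g)"
  have "open (h -` U)"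
    unfolding h_def by (intro open_vimage assms(1)) (auto intro!: continuous_intros simp: case_prod_unfold)
  moreover have "(c, g, c) \<in> h -` U" using assms(2) by (simp add: h_def)
  ultimately obtain A1 S where A1: "open A1" "open S" "c \<in> A1" "(g, c) \<in> S" "A1 \<times> S \<subseteq> h -` U"
    by (metis open_prod_elim mem_Sigma_iff)
  then obtain B A2 where B: "open B" "open A2" "g \<in> B" "c \<in> A2" "B \<times> A2 \<subseteq> S"
    by (metis open_prod_elim mem_Sigma_iff)
  show ?thesis
  proof (rule that[of "A1 \<inter> A2" B])
    fix a b a' assume "a \<in> A1 \<inter> A2" "b \<in> B" "a' \<in> A1 \<inter> A2"
    then have "(a, b, a') \<in> A1 \<times> S" using B(5) by blast
    then show "a + b - a' \<in> U" using A1(5) by (auto simp: h_def)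
  qed (use A1 B in auto)
qed

lemma conjugate_mem_ess_range_at:
  fixes T :: "'a::topological_space \<Rightarrow> 'a"
    and f :: "'a \<Rightarrow> 'g::topological_group_add"
  assumes hom: "homeomorphism UNIV UNIV T (inv T)"
    and cont_f: "continuous_on UNIV f"
    and g: "g \<in> ess_range_at f T x"
  shows "cocycle f T n x + g - cocycle f T n x \<in> ess_range_at f T (Tpow T n x)"
  unfolding ess_range_at_def
proof (intro CollectI allI impI, elim conjE)
  fix U V
  assume "open U" "cocycle f T n x + g - cocycle f T n x \<in> U" "open V" "Tpow T n x \<in> V"
  have bij: "bij T" by (rule homeomorphism_imp_bij[OF hom])
  note cont_T = homeomorphism_cont1[OF hom] and cont_inv = homeomorphism_cont2[OF hom]
  obtain A B where AB: "open A" "open B" "cocycle f T n x \<in> A" "g \<in> B"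
    "\<And>a b a'. a \<in> A \<Longrightarrow> b \<in> B \<Longrightarrow> a' \<in> A \<Longrightarrow> a + b - a' \<in> U"
    using open_conjugate_nhds[OF \<open>open U\<close> \<open>cocycle f T n x + g - cocycle f T n x \<in> U\<close>] by blast
  define W where "W = Tpow T n -` V \<inter> cocycle f T n -` A"
  have "open W"
    unfolding W_def using \<open>open V\<close> \<open>open A\<close>
    by (intro open_Int open_vimage continuous_on_Tpow continuous_on_cocycle cont_T cont_inv cont_f)
  moreover have "x \<in> W" using \<open>Tpow T n x \<in> V\<close> AB(3) by (simp add: W_def)
  ultimately have "\<exists>m. m \<noteq> 0 \<and> {y. Tpow T m y \<in> W} \<inter> W \<inter> {y. cocycle f T m y \<in> B} \<noteq> {}"
    using g AB(2,4) unfolding ess_range_at_def by simp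
  then obtain m y where m: "m \<noteq> 0"
    and y: "Tpow T m y \<in> W" "y \<in> W" "cocycle f T m y \<in> B"
    by blast
  have "Tpow T n y \<in> V" using y(2) by (simp add: W_def)
  moreover have "Tpow T m (Tpow T n y) \<in> V"
    using y(1) Tpow_commute[OF bij, of m n y] by (simp add: W_def)
  moreover have "cocycle f T m (Tpow T n y) \<in> U"
    unfolding cocycle_at_Tpow[OF bij, of f m n y]
    using y by (intro AB(5)) (simp_all add: W_def)
  ultimately show "\<exists>m. m \<noteq> 0 \<and>
      {y. Tpow T m y \<in> V} \<inter> V \<inter> {y. cocycle f T m y \<in> U} \<noteq> {}"
    using m by blast
qed

theorem lemma1p1:
  fixes T :: "'a::metric_space \<Rightarrow> 'a"
    and f :: "'a \<Rightarrow> 'g::{topological_group_add, second_countable_topology}"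
  assumes "compact (UNIV :: 'a set)"
    and "homeomorphism UNIV UNIV T (inv T)"
    and "minimal_map T"
    and "locally_compact_space (euclidean :: 'g topology)"
    and "continuous_on UNIV f"
  shows "ess_range_at f T (Tpow T n x) =
         (\<lambda>g. cocycle f T n x + g - cocycle f T n x) ` ess_range_at f T x"
proof -
  have bij: "bij T" by (rule homeomorphism_imp_bij[OF assms(2)])
  note conj = conjugate_mem_ess_range_at[OF assms(2,5)]
  show ?thesis
  proof (intro equalityI subsetI)
    fix h assume "h \<in> ess_range_at f T (Tpow T n x)"
    then have "- cocycle f T n x + h + cocycle f T n x \<in> ess_range_at f T x"
      using conj[of h "Tpow T n x" "- n"] by (simp add: Tpow_neg_cancel[OF bij] cocycle_neg[OF bij])
    then show "h \<in> (\<lambda>g. cocycle f T n x + g - cocycle f T n x) ` ess_range_at f T x"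
      by (rule rev_image_eqI) (simp add: add.assoc)
  qed (auto intro: conj)
qed

end
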